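(* Let $M\subseteq[r]^d$ be a dot array satisfying (P2), (P3) and (P4). Then $M$ is a totally rankable dot array of rank $r$.
   Context: $[r]=\{0,\dots,r\}$; a dot array is a subset of $[r]^d$, partially ordered coordinatewise with meet $\mathbf x\wedge\mathbf y=(\min(x_i,y_i))_i$. Rankability. Let $\mathrm{rk}_iP$ be one less than the number of distinct $i$-th coordinates among elements of $P$. $P$ is rankable of rank $s$ if $\mathrm{rk}_iP=s$ for all $i$. $P$ is totally rankable if every principal subarray $P[\mathbf x]=\{\mathbf y\in P:\mathbf y\succeq\mathbf x\}$, $\mathbf x\in[r]^d$, is rankable. Its rank is the rank of $P$ itself. Subarrays. A $[k]^d$-subarray of $M$ is $M\cap(A_1\times\dots\times A_d)$ with $A_i\subseteq[r]$ and $|A_i|=k+1$. It is regarded as a dot array in $[k]^d$ via the order-preserving bijections $A_i\to[k]$. Properties of a dot array $M\subseteq[r]^d$: (P1) $M$ is closed under $\wedge$. (P2) for every $j$ and every $c\in[r]$ some $\mathbf w\in M$ has $w_j=c$. (P3) every set $S$ of $r+2$ elements of $M$ contains a subset $S'$ (with at least two elements) such that for every $i$ the value $\min\{x_i:\mathbf x\in S'\}$ is attained by at least two elements of $S'$. (P4) (recursive in $r$; vacuous for $r=0$) for every $0\le k\le r-1$ and every set $N$ of $k+1$ elements of $M$, there is a $[k]^d$-subarray $M'$ of $M$ containing $N$ which, as a dot array in $[k]^d$, satisfies (P1), (P2), (P3), (P4) with $r$ replaced by $k$. *)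

theory Defs
  imports Main
begin

text \<open>Points of [r]^d are functions nat => nat, with coordinates 0..d-1 in [r]
  and value 0 at all indices >= d (extensional representation).\<close>

type_synonym point = "nat \<Rightarrow> nat"

definition grid :: "nat \<Rightarrow> nat \<Rightarrow> point set" where
  "grid r d = {x. (\<forall>i<d. x i \<le> r) \<and> (\<forall>i\<ge>d. x i = 0)}"

definition dot_array :: "nat \<Rightarrow> nat \<Rightarrow> point set \<Rightarrow> bool" where
  "dot_array r d P \<longleftrightarrow> P \<subseteq> grid r d"

definition meet :: "nat \<Rightarrow> point \<Rightarrow> point \<Rightarrow> point" where
  "meet d x y = (\<lambda>i. min (x i) (y i))"

text \<open>rk_i P = (number of distinct i-th coordinates) - 1, as an integer (empty P gives -1).\<close>
definition rk :: "nat \<Rightarrow> point set \<Rightarrow> int" where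
  "rk i P = int (card ((\<lambda>x. x i) ` P)) - 1"

definition rankable_of_rank :: "nat \<Rightarrow> point set \<Rightarrow> int \<Rightarrow> bool" where
  "rankable_of_rank d P s \<longleftrightarrow> (\<forall>i<d. rk i P = s)"

definition rankable :: "nat \<Rightarrow> point set \<Rightarrow> bool" where
  "rankable d P \<longleftrightarrow> (\<exists>s. rankable_of_rank d P s)"

definition principal :: "nat \<Rightarrow> point set \<Rightarrow> point \<Rightarrow> point set" where
  "principal d P x = {y \<in> P. \<forall>i<d. x i \<le> y i}"

definition totally_rankable :: "nat \<Rightarrow> nat \<Rightarrow> point set \<Rightarrow> bool" where
  "totally_rankable r d P \<longleftrightarrow> (\<forall>x \<in> grid r d. rankable d (principal d P x))"

definition totally_rankable_of_rank :: "nat \<Rightarrow> nat \<Rightarrow> point set \<Rightarrow> int \<Rightarrow> bool" where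
  "totally_rankable_of_rank r d P s \<longleftrightarrow> totally_rankable r d P \<and> rankable_of_rank d P s"

definition P1 :: "nat \<Rightarrow> point set \<Rightarrow> bool" where
  "P1 d M \<longleftrightarrow> (\<forall>x\<in>M. \<forall>y\<in>M. meet d x y \<in> M)"

definition P2 :: "nat \<Rightarrow> nat \<Rightarrow> point set \<Rightarrow> bool" where
  "P2 r d M \<longleftrightarrow> (\<forall>j<d. \<forall>c\<le>r. \<exists>w\<in>M. w j = c)"

definition P3 :: "nat \<Rightarrow> nat \<Rightarrow> point set \<Rightarrow> bool" where
  "P3 r d M \<longleftrightarrow> (\<forall>S. S \<subseteq> M \<and> card S = r + 2 \<longrightarrow>
     (\<exists>S'. S' \<subseteq> S \<and> 2 \<le> card S' \<and>
        (\<forall>i<d. 2 \<le> card {x\<in>S'. x i = Min ((\<lambda>y. y i) ` S')})))"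

text \<open>Relabelling of a subarray: A i (i<d) are the chosen coordinate sets; the
  order-preserving bijection A i -> [k] sends a to the number of elements of A i below a.\<close>
definition relabel :: "nat \<Rightarrow> (nat \<Rightarrow> nat set) \<Rightarrow> point \<Rightarrow> point" where
  "relabel d A y = (\<lambda>i. if i < d then card {a \<in> A i. a < y i} else 0)"

definition subarray_sets :: "nat \<Rightarrow> nat \<Rightarrow> point set \<Rightarrow> (nat \<Rightarrow> nat set) \<Rightarrow> point set" where
  "subarray_sets r d M A = {y \<in> M. \<forall>i<d. y i \<in> A i}"

definition is_sub_choice :: "nat \<Rightarrow> nat \<Rightarrow> nat \<Rightarrow> (nat \<Rightarrow> nat set) \<Rightarrow> bool" where
  "is_sub_choice r d k A \<longleftrightarrow> (\<forall>i<d. A i \<subseteq> {0..r} \<and> card (A i) = k + 1)"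

function P4 :: "nat \<Rightarrow> nat \<Rightarrow> point set \<Rightarrow> bool" where
  "P4 r d M \<longleftrightarrow> (\<forall>k<r. \<forall>N. N \<subseteq> M \<and> card N = k + 1 \<longrightarrow>
     (\<exists>A. is_sub_choice r d k A \<and> N \<subseteq> subarray_sets r d M A \<and>
        (let M' = relabel d A ` subarray_sets r d M A in
           P1 d M' \<and> P2 k d M' \<and> P3 k d M' \<and> P4 k d M')))"
  by auto
termination by (relation "measure (\<lambda>(r, d, M). r)") auto

end

theory Submission
  imports Defs
begin

text \<open>
  For a principal subarray \<open>P = M[x]\<close> and coordinates \<open>i, j\<close> we show that \<open>P\<close> has at most
  as many distinct \<open>i\<close>-th as \<open>j\<close>-th coordinates, by induction on \<open>r\<close>. Choose a set \<open>N \<subseteq> P\<close>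
  containing one point for each \<open>i\<close>-th coordinate value of \<open>P\<close>, say \<open>n\<close> points.
  If \<open>n = r + 1\<close>, then \<open>P = M\<close>: a point \<open>w \<notin> P\<close> together with \<open>N\<close> would violate (P3),
  since in a subset containing \<open>w\<close> the point \<open>w\<close> is the unique minimum in a coordinate where
  it drops below \<open>x\<close>, and a subset of \<open>N\<close> has pairwise distinct \<open>i\<close>-th coordinates.
  Then (P2) gives \<open>r + 1\<close> values in every coordinate.
  If \<open>n \<le> r\<close>, (P4) yields a \<open>[n-1]\<^sup>d\<close>-subarray \<open>M'\<close> containing \<open>N\<close>. The relabelling is
  order-preserving, so the image of \<open>N\<close> lies in the principal subarray of \<open>M'\<close> at its meet,
  which in turn is the image of a part of \<open>P\<close>; the induction hypothesis for \<open>M'\<close> concludes.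
\<close>

declare P4.simps[simp del]

abbreviation coords :: "nat \<Rightarrow> point set \<Rightarrow> nat set" where
  "coords i Q \<equiv> (\<lambda>z. z i) ` Q"

abbreviation Min_point :: "point set \<Rightarrow> point" where
  "Min_point Q \<equiv> \<lambda>l. Min (coords l Q)"

abbreviation subarray :: "nat \<Rightarrow> nat \<Rightarrow> point set \<Rightarrow> (nat \<Rightarrow> nat set) \<Rightarrow> point set" where
  "subarray r d M A \<equiv> relabel d A ` subarray_sets r d M A"

lemma obtain_inj_on_section:
  obtains N where "N \<subseteq> P" "inj_on f N" "f ` N = f ` P"
proof
  show "inv_into P f ` f ` P \<subseteq> P" by (auto intro: inv_into_into)
  show "inj_on f (inv_into P f ` f ` P)" by (auto intro!: inj_onI simp: f_inv_into_f)
  show "f ` inv_into P f ` f ` P = f ` P" by (force simp: f_inv_into_f image_image)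
qed

lemma card_less_le_iff:
  fixes a b :: "'a :: linorder"
  assumes "finite B" "a \<in> B" "b \<in> B"
  shows "card {c\<in>B. c < a} \<le> card {c\<in>B. c < b} \<longleftrightarrow> a \<le> b"
proof
  assume "a \<le> b"
  then have "{c\<in>B. c < a} \<subseteq> {c\<in>B. c < b}" by auto
  then show "card {c\<in>B. c < a} \<le> card {c\<in>B. c < b}"
    using assms(1) by (simp add: card_mono)
next
  assume le: "card {c\<in>B. c < a} \<le> card {c\<in>B. c < b}"
  show "a \<le> b"
  proof (rule ccontr)
    assume "\<not> a \<le> b"
    then have "b < a" by simp
    then have "{c\<in>B. c < b} \<subset> {c\<in>B. c < a}"
      using assms(3) by (blast intro: less_trans)
    then have "card {c\<in>B. c < b} < card {c\<in>B. c < a}"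
      using assms(1) by (simp add: psubset_card_mono)
    then show False using le by simp
  qed
qed

lemma inj_on_card_less:
  fixes B :: "'a :: linorder set"
  assumes "finite B"
  shows "inj_on (\<lambda>a. card {c\<in>B. c < a}) B"
proof (rule inj_onI)
  fix a b assume "a \<in> B" "b \<in> B" "card {c\<in>B. c < a} = card {c\<in>B. c < b}"
  then show "a = b"
    using card_less_le_iff[OF assms, of a b] card_less_le_iff[OF assms, of b a] by simp
qed

lemma card_less_less_card:
  fixes a :: "'a :: linorder"
  assumes "finite B" "a \<in> B"
  shows "card {c\<in>B. c < a} < card B"
proof (rule psubset_card_mono)
  show "{c\<in>B. c < a} \<subset> B" using assms(2) by auto
qed (fact assms(1))

lemma coords_subset_grid:
  assumes "Q \<subseteq> grid r d"
  shows "coords i Q \<subseteq> {0..r}"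
  using assms by (cases "i < d") (auto simp: grid_def)

lemma finite_coords_grid:
  assumes "Q \<subseteq> grid r d"
  shows "finite (coords i Q)"
  using coords_subset_grid[OF assms] finite_subset by blast

lemma coords_eq_if_P2:
  assumes "dot_array r d M" "P2 r d M" "j < d"
  shows "coords j M = {0..r}"
proof
  show "coords j M \<subseteq> {0..r}"
    using assms(1) by (intro coords_subset_grid) (simp add: dot_array_def)
  show "{0..r} \<subseteq> coords j M"
  proof
    fix c assume "c \<in> {0..r}"
    then obtain w where "w \<in> M" "w j = c" using assms(2,3) unfolding P2_def by auto
    then show "c \<in> coords j M" by blast
  qed
qed

lemma subset_principal_Min:
  assumes "finite Q" "Q \<subseteq> P"
  shows "Q \<subseteq> principal d P (Min_point Q)"
proof
  fix z assume "z \<in> Q"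
  then have "Min (coords l Q) \<le> z l" for l using assms(1) by simp
  then show "z \<in> principal d P (Min_point Q)"
    using \<open>z \<in> Q\<close> assms(2) by (auto simp: principal_def)
qed

lemma principal_eq_if_P3:
  assumes "P3 r d M" "i < d" "N \<subseteq> principal d M x" "card N = r + 1"
    and "inj_on (\<lambda>z. z i) N"
  shows "principal d M x = M"
proof
  show "principal d M x \<subseteq> M" by (auto simp: principal_def)
  show "M \<subseteq> principal d M x"
  proof
    fix w assume wM: "w \<in> M"
    show "w \<in> principal d M x"
    proof (rule ccontr)
      assume wP: "w \<notin> principal d M x"
      then obtain l where l: "l < d" "w l < x l" using wM by (auto simp: principal_def not_le)
      have finN: "finite N" using assms(4) card.infinite by fastforce
      have "w \<notin> N" using assms(3) wP by blast
      then have "card (insert w N) = r + 2" using finN assms(4) by simp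
      moreover have "insert w N \<subseteq> M" using assms(3) wM by (auto simp: principal_def)
      ultimately obtain S where S: "S \<subseteq> insert w N"
        and minS: "\<forall>i<d. 2 \<le> card {z\<in>S. z i = Min (coords i S)}"
        using assms(1)[unfolded P3_def, rule_format, of "insert w N"] by blast
      have finS: "finite S" using S(1) finN finite_subset by blast
      show False
      proof (cases "w \<in> S")
        case True
        have "{z\<in>S. z l = Min (coords l S)} \<subseteq> {w}"
        proof
          fix z assume z: "z \<in> {z\<in>S. z l = Min (coords l S)}"
          then have "z l \<le> w l" using True finS by simp
          then have "z \<notin> principal d M x" using l by (auto simp: principal_def)
          then show "z \<in> {w}" using z S(1) assms(3) by auto
        qed
        then have "card {z\<in>S. z l = Min (coords l S)} \<le> Suc 0"
          using card_mono[of "{w}"] by fastforce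
        then show False using minS l(1) by fastforce
      next
        case False
        then have "inj_on (\<lambda>z. z i) S" using S(1) assms(5) inj_on_subset by blast
        then have "card {z\<in>S. z i = Min (coords i S)} \<le> Suc 0"
          using finS by (subst card_le_Suc0_iff_eq) (auto simp: inj_on_def)
        then show False using minS assms(2) by fastforce
      qed
    qed
  qed
qed

lemma P4_obtain_subarray:
  assumes "P4 r d M" "k < r" "N \<subseteq> M" "card N = k + 1"
  obtains A where "is_sub_choice r d k A" "N \<subseteq> subarray_sets r d M A"
    and "P2 k d (subarray r d M A)"
    and "P3 k d (subarray r d M A)"
    and "P4 k d (subarray r d M A)"
  using assms(1)[unfolded P4.simps[of r d M] Let_def] assms(2-4) that by blast

lemma coords_relabel:
  assumes "i < d"
  shows "coords i (relabel d A ` Q) = (\<lambda>a. card {c\<in>A i. c < a}) ` coords i Q"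
  using assms by (auto simp: relabel_def image_image)

lemma finite_sub_choice:
  assumes "is_sub_choice r d k A" "l < d"
  shows "finite (A l)"
  using assms by (auto simp: is_sub_choice_def intro: finite_subset)

lemma dot_array_subarray:
  assumes "is_sub_choice r d k A"
  shows "dot_array k d (subarray r d M A)"
proof -
  have "card {c\<in>A i. c < a} \<le> k" if "i < d" "a \<in> A i" for i a
  proof -
    have "card (A i) = k + 1" using assms that(1) by (simp add: is_sub_choice_def)
    then show ?thesis using card_less_less_card[of "A i" a] that(2) card.infinite by fastforce
  qed
  then show ?thesis
    by (auto simp: dot_array_def grid_def relabel_def subarray_sets_def)
qed

lemma principal_subarray_subset:
  assumes "is_sub_choice r d k A" "N \<subseteq> subarray_sets r d M A" "N \<subseteq> principal d M x"
    and "finite N" "N \<noteq> {}"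
  shows "principal d (subarray r d M A) (Min_point (relabel d A ` N))
           \<subseteq> relabel d A ` principal d M x"
proof
  fix z' assume "z' \<in> principal d (subarray r d M A) (Min_point (relabel d A ` N))"
  then obtain z where z: "z \<in> subarray_sets r d M A" "z' = relabel d A z"
    and ge: "\<forall>l<d. Min (coords l (relabel d A ` N)) \<le> z' l"
    by (auto simp: principal_def)
  have "x l \<le> z l" if l: "l < d" for l
  proof -
    have "Min (coords l (relabel d A ` N)) \<in> coords l (relabel d A ` N)"
      using assms(4,5) by (intro Min_in) auto
    then obtain q where q: "q \<in> N" "Min (coords l (relabel d A ` N)) = relabel d A q l"
      by blast
    have "q l \<in> A l" "z l \<in> A l" using q(1) z(1) assms(2) l by (auto simp: subarray_sets_def)
    moreover have "relabel d A q l \<le> relabel d A z l"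
      using ge[rule_format, OF l] q(2) z(2) by simp
    ultimately have "q l \<le> z l"
      using card_less_le_iff[OF finite_sub_choice[OF assms(1) l], of "q l" "z l"] l
      by (simp add: relabel_def)
    moreover have "x l \<le> q l" using q(1) assms(3) l by (auto simp: principal_def)
    ultimately show ?thesis by simp
  qed
  then show "z' \<in> relabel d A ` principal d M x"
    using z by (auto simp: principal_def subarray_sets_def)
qed

lemma card_coords_le_principal_subarray:
  assumes "is_sub_choice r d k A" "N \<subseteq> subarray_sets r d M A" "finite N" "i < d"
  shows "card (coords i N)
           \<le> card (coords i (principal d (subarray r d M A) (Min_point (relabel d A ` N))))"
proof -
  have "coords i N \<subseteq> A i" using assms(2,4) by (auto simp: subarray_sets_def)
  then have "inj_on (\<lambda>a. card {c\<in>A i. c < a}) (coords i N)"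
    using inj_on_subset[OF inj_on_card_less[OF finite_sub_choice[OF assms(1,4)]]] by blast
  then have "card (coords i N) = card (coords i (relabel d A ` N))"
    by (simp add: coords_relabel[OF assms(4)] card_image)
  also have "\<dots> \<le> card (coords i (principal d (subarray r d M A) (Min_point (relabel d A ` N))))"
  proof (intro card_mono image_mono)
    show "relabel d A ` N \<subseteq> principal d (subarray r d M A) (Min_point (relabel d A ` N))"
      using assms(2,3) by (intro subset_principal_Min) auto
    show "finite (coords i (principal d (subarray r d M A) (Min_point (relabel d A ` N))))"
      using dot_array_subarray[OF assms(1), of M]
      by (intro finite_coords_grid) (auto simp: dot_array_def principal_def)
  qed
  finally show ?thesis .
qed

lemma card_coords_principal_subarray_le:
  assumes "dot_array r d M" "is_sub_choice r d k A" "N \<subseteq> subarray_sets r d M A"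
    and "N \<subseteq> principal d M x" "finite N" "N \<noteq> {}" "j < d"
  shows "card (coords j (principal d (subarray r d M A) (Min_point (relabel d A ` N))))
           \<le> card (coords j (principal d M x))"
proof -
  have fin: "finite (coords j (principal d M x))"
    using assms(1) by (intro finite_coords_grid) (auto simp: dot_array_def principal_def)
  have "card (coords j (principal d (subarray r d M A) (Min_point (relabel d A ` N))))
          \<le> card (coords j (relabel d A ` principal d M x))"
    using principal_subarray_subset[OF assms(2-6)] fin
    by (intro card_mono image_mono) (simp_all add: coords_relabel[OF assms(7)])
  also have "\<dots> \<le> card (coords j (principal d M x))"
    unfolding coords_relabel[OF assms(7)] by (rule card_image_le[OF fin])
  finally show ?thesis .
qed

lemma card_coords_principal_le:
  assumes "dot_array r d M" "P2 r d M" "P3 r d M" "P4 r d M" "i < d" "j < d"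
  shows "card (coords i (principal d M x)) \<le> card (coords j (principal d M x))"
  using assms(1-4)
proof (induction r arbitrary: M x rule: less_induct)
  case (less r)
  define P where "P = principal d M x"
  have PM: "P \<subseteq> M" by (auto simp: P_def principal_def)
  have Pgrid: "P \<subseteq> grid r d" using PM less.prems(1) by (auto simp: dot_array_def)
  obtain N where N: "N \<subseteq> P" "inj_on (\<lambda>z. z i) N" "coords i N = coords i P"
    by (rule obtain_inj_on_section)
  define n where "n = card (coords i P)"
  have cardN: "card N = n" using card_image[OF N(2)] N(3) by (simp add: n_def)
  have "n \<le> r + 1" using card_mono[OF _ coords_subset_grid[OF Pgrid]] by (simp add: n_def)
  then consider "n = 0" | "n = r + 1" | k where "k < r" "n = k + 1"
    by (cases n) (auto simp: le_less)
  then show ?case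
  proof cases
    case 1
    then show ?thesis by (simp add: n_def P_def)
  next
    case 2
    then have "P = M"
      using principal_eq_if_P3[OF less.prems(3) assms(5)] N cardN by (simp add: P_def)
    then have "card (coords j P) = r + 1"
      using coords_eq_if_P2[OF less.prems(1,2) assms(6)] by simp
    then show ?thesis using 2 by (simp add: n_def P_def)
  next
    case (3 k)
    have finN: "finite N" "N \<noteq> {}" using cardN 3(2) card.infinite by force+
    obtain A where A: "is_sub_choice r d k A" "N \<subseteq> subarray_sets r d M A"
      and M': "P2 k d (subarray r d M A)" "P3 k d (subarray r d M A)" "P4 k d (subarray r d M A)"
      using P4_obtain_subarray[OF less.prems(4) 3(1)] N(1) PM cardN 3(2) by blast
    have "n \<le> card (coords i (principal d (subarray r d M A) (Min_point (relabel d A ` N))))"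
      using card_coords_le_principal_subarray[OF A finN(1) assms(5)] N(3) by (simp add: n_def)
    also have "\<dots> \<le> card (coords j (principal d (subarray r d M A) (Min_point (relabel d A ` N))))"
      by (rule less.IH[OF 3(1) dot_array_subarray[OF A(1)] M'])
    also have "\<dots> \<le> card (coords j P)"
      using card_coords_principal_subarray_le[OF less.prems(1) A _ finN assms(6)] N(1)
      by (simp add: P_def)
    finally show ?thesis by (simp add: n_def P_def)
  qed
qed

theorem mainTheorem4:
  fixes r d :: nat and M :: "point set"
  assumes "dot_array r d M"
    and "P2 r d M" and "P3 r d M" and "P4 r d M"
  shows "totally_rankable_of_rank r d M (int r)"
proof -
  have rk_eq: "rk i (principal d M x) = rk j (principal d M x)" if "i < d" "j < d" for i j x
    using card_coords_principal_le[OF assms that, of x]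
      card_coords_principal_le[OF assms that(2,1), of x]
    by (simp add: rk_def)
  have "totally_rankable r d M"
    unfolding totally_rankable_def rankable_def rankable_of_rank_def
  proof (intro ballI exI allI impI)
    fix x i assume "i < d"
    then show "rk i (principal d M x) = rk 0 (principal d M x)" using rk_eq[of i 0 x] by simp
  qed
  moreover have "rankable_of_rank d M (int r)"
    using coords_eq_if_P2[OF assms(1,2)] by (simp add: rankable_of_rank_def rk_def)
  ultimately show ?thesis by (simp add: totally_rankable_of_rank_def)
qed

end
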